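(* There exist a decreasing gap asymptotically dense set $\Lambda\subset[0,+\infty)$ and a function $f\in C_0^+(\mathbb{R})$ such that $[0,1]\subset D(f,\Lambda)$ and $[4,5]\subset C(f,\Lambda)$.
   Context: For a discrete set $\Lambda\subset[0,\infty)$ and measurable $f:\mathbb{R}\to[0,+\infty)$, put $s(x)=\sum_{\lambda\in\Lambda}f(x+\lambda)$, $C(f,\Lambda)=\{x: s(x)<\infty\}$ and $D(f,\Lambda)=\{x: s(x)=\infty\}$. An unbounded infinite discrete set $\Lambda=\{\lambda_1<\lambda_2<\cdots\}$ is a decreasing gap asymptotically dense set if the gaps $d_n=\lambda_n-\lambda_{n-1}$ tend to $0$ monotone decreasingly. $C_0^+(\mathbb{R})$ denotes the set of continuous functions $\mathbb{R}\to[0,+\infty)$ tending to $0$ at $+\infty$. *)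

theory Defs
  imports "HOL-Analysis.Analysis"
begin

definition shift_sum :: "(real \<Rightarrow> real) \<Rightarrow> real set \<Rightarrow> real \<Rightarrow> ennreal" where
  "shift_sum f \<Lambda> x = (\<Sum>\<^sub>\<infinity>l\<in>\<Lambda>. ennreal (f (x + l)))"

definition conv_set :: "(real \<Rightarrow> real) \<Rightarrow> real set \<Rightarrow> real set" where
  "conv_set f \<Lambda> = {x. shift_sum f \<Lambda> x < \<infinity>}"

definition div_set :: "(real \<Rightarrow> real) \<Rightarrow> real set \<Rightarrow> real set" where
  "div_set f \<Lambda> = {x. shift_sum f \<Lambda> x = \<infinity>}"

definition dec_gap_asymp_dense :: "real set \<Rightarrow> bool" where
  "dec_gap_asymp_dense \<Lambda> \<longleftrightarrow> \<Lambda> \<subseteq> {0..} \<and> \<not> bdd_above \<Lambda> \<and>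
     (\<exists>lam :: nat \<Rightarrow> real. strict_mono lam \<and> range lam = \<Lambda> \<and>
        (\<forall>n. lam (Suc (Suc n)) - lam (Suc n) \<le> lam (Suc n) - lam n) \<and>
        (\<lambda>n. lam (Suc n) - lam n) \<longlonglongrightarrow> 0)"

definition C0_plus :: "(real \<Rightarrow> real) set" where
  "C0_plus = {f. continuous_on UNIV f \<and> (\<forall>x. 0 \<le> f x) \<and> (f \<longlongrightarrow> 0) at_top}"

end

theory Submission
  imports Defs
begin

(* On the k-th block [4k, 4k + 4) the set Lambda is the grid of step 1 / m_k, where
   m_k = (k + 1) 2^A_k and A_k is the number of points in the earlier blocks, so the gaps
   decrease to 0. On the same interval f(y) = 2^-A_k (1 - cos (pi y / 2)), a bump vanishing at
   the block endpoints. For 0 <= x <= 1 the m_k points of block k in [4k + 1, 4k + 2) are moved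
   into [4k + 1, 4k + 3], where f >= 2^-A_k, so block k alone contributes at least k + 1 to s(x).
   For x >= 4 the point x + lambda_n lies in a later block than lambda_n, where
   f <= 2 * 2^-A_(k+1) <= 2 * 2^-n, so s(x) is dominated by a geometric series. *)

definition segment_index :: "(nat \<Rightarrow> nat) \<Rightarrow> nat \<Rightarrow> nat" where
  "segment_index A n = (LEAST k. n < A (Suc k))"

lemma segment_index_bounds:
  assumes "strict_mono A" "A 0 = 0"
  shows "A (segment_index A n) \<le> n" "n < A (Suc (segment_index A n))"
proof -
  have "n < A (Suc n)"
    using strict_mono_imp_increasing[OF assms(1), of "Suc n"] by simp
  then show "n < A (Suc (segment_index A n))"
    unfolding segment_index_def by (rule LeastI)
  show "A (segment_index A n) \<le> n"
  proof (cases "segment_index A n")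
    case (Suc j)
    then have "\<not> n < A (Suc j)"
      using Least_le[of "\<lambda>k. n < A (Suc k)" j] unfolding segment_index_def by fastforce
    with Suc show ?thesis by simp
  qed (use assms(2) in simp)
qed

lemma segment_index_ge:
  assumes "strict_mono A" "A 0 = 0" "A k \<le> n"
  shows "k \<le> segment_index A n"
proof (rule ccontr)
  assume "\<not> k \<le> segment_index A n"
  then have "A (Suc (segment_index A n)) \<le> A k"
    using strict_mono_less_eq[OF assms(1)] by simp
  with segment_index_bounds(2)[OF assms(1,2), of n] assms(3) show False by simp
qed

lemma segment_index_eqI:
  assumes "strict_mono A" "A 0 = 0" "A k \<le> n" "n < A (Suc k)"
  shows "segment_index A n = k"
proof -
  have "segment_index A n < Suc k"
    using segment_index_bounds(1)[OF assms(1,2), of n] assms(4) strict_mono_less[OF assms(1)]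
    by (metis le_less_trans)
  with segment_index_ge[OF assms(1-3)] show ?thesis by simp
qed

lemma mono_segment_index:
  assumes "strict_mono A" "A 0 = 0"
  shows "mono (segment_index A)"
  by (rule monoI, rule segment_index_ge[OF assms])
     (use segment_index_bounds(1)[OF assms] order_trans in blast)

lemma continuous_on_floor_step_mult:
  fixes c :: "nat \<Rightarrow> real" and h :: "real \<Rightarrow> real"
  assumes h: "continuous_on UNIV h" and p: "0 < p"
    and h_zero: "\<And>j::int. h (p * of_int j) = 0" and c: "\<And>k. \<bar>c k\<bar> \<le> B"
  shows "continuous_on UNIV (\<lambda>y. c (nat \<lfloor>y / p\<rfloor>) * h y)"
  unfolding continuous_on_eq_continuous_at[OF open_UNIV]
proof (intro ballI)
  fix y :: real
  let ?g = "\<lambda>y. c (nat \<lfloor>y / p\<rfloor>) * h y"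
  have hy: "isCont h y" using h by (simp add: continuous_on_eq_continuous_at)
  show "isCont ?g y"
  proof (cases "y / p \<in> \<int>")
    case True
    then obtain j where "y = p * of_int j" using p by (auto elim!: Ints_cases simp: field_simps)
    then have "h y = 0" by (simp add: h_zero)
    have bound: "\<bar>?g z\<bar> \<le> B * \<bar>h z\<bar>" for z
      unfolding abs_mult by (rule mult_right_mono[OF c abs_ge_zero])
    have "(h \<longlongrightarrow> 0) (at y)" using hy \<open>h y = 0\<close> by (simp add: isCont_def)
    then have lim: "((\<lambda>z. B * \<bar>h z\<bar>) \<longlongrightarrow> 0) (at y)"
      by (intro tendsto_mult_right_zero tendsto_rabs_zero)
    have "((\<lambda>z. \<bar>?g z\<bar>) \<longlongrightarrow> 0) (at y)"
      by (rule tendsto_sandwich[OF _ _ tendsto_const lim]) (simp_all add: bound)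
    then have "(?g \<longlongrightarrow> 0) (at y)" by (rule tendsto_rabs_zero_cancel)
    then show ?thesis using \<open>h y = 0\<close> by (simp add: isCont_def)
  next
    case False
    define j where "j = \<lfloor>y / p\<rfloor>"
    have "of_int j \<noteq> y / p" using False by (metis Ints_of_int)
    then have "of_int j < y / p" "y / p < of_int j + 1"
      using floor_correct[of "y / p"] unfolding j_def by linarith+
    then have "p * of_int j < y" "y < p * of_int j + p"
      using p by (simp_all add: field_simps)
    then have "eventually (\<lambda>z. z \<in> {p * of_int j <..< p * of_int j + p}) (nhds y)"
      by (intro eventually_nhds_in_open) auto
    then have "eventually (\<lambda>z. ?g z = c (nat j) * h z) (nhds y)"
    proof eventually_elim
      case (elim z)
      then have "of_int j \<le> z / p" "z / p < of_int j + 1" using p by (simp_all add: field_simps)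
      then have "\<lfloor>z / p\<rfloor> = j" by (simp add: floor_eq_iff)
      then show ?case by simp
    qed
    moreover have "isCont (\<lambda>z. c (nat j) * h z) y" using hy by (intro continuous_intros)
    ultimately show ?thesis by (simp only: isCont_cong)
  qed
qed

lemma shift_sum_range:
  assumes "inj lam"
  shows "shift_sum f (range lam) x = (\<Sum>\<^sub>\<infinity>n. ennreal (f (x + lam n)))"
  using infsum_reindex[OF assms, of "\<lambda>l. ennreal (f (x + l))"]
  unfolding shift_sum_def by (simp add: o_def)

lemma conv_set_range_if_summable_majorant:
  fixes g :: "nat \<Rightarrow> real"
  assumes "inj lam" and g: "summable g" "\<And>n. 0 \<le> g n" and le: "\<And>n. f (x + lam n) \<le> g n"
  shows "x \<in> conv_set f (range lam)"
proof -
  have "(\<Sum>\<^sub>\<infinity>n. ennreal (f (x + lam n))) \<le> ennreal (suminf g)"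
  proof (rule infsum_le_finite_sums)
    show "(\<lambda>n. ennreal (f (x + lam n))) summable_on UNIV"
      by (simp add: nonneg_summable_on_complete)
    fix F :: "nat set" assume "finite F"
    have "(\<Sum>n\<in>F. ennreal (f (x + lam n))) \<le> (\<Sum>n\<in>F. ennreal (g n))"
      by (intro sum_mono ennreal_leI le)
    also have "\<dots> = ennreal (\<Sum>n\<in>F. g n)"
      using g(2) by (rule sum_ennreal)
    also have "\<dots> \<le> ennreal (suminf g)"
      using sum_le_suminf[OF g(1) \<open>finite F\<close>] g(2) by (simp add: ennreal_leI)
    finally show "(\<Sum>n\<in>F. ennreal (f (x + lam n))) \<le> ennreal (suminf g)" .
  qed
  also have "\<dots> < \<infinity>" by simp
  finally show ?thesis
    unfolding conv_set_def shift_sum_range[OF assms(1)] by simp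
qed

lemma div_set_range_if_unbounded_sums:
  assumes "inj lam" and nonneg: "\<And>n. 0 \<le> f (x + lam n)"
    and unbounded: "\<And>k::nat. \<exists>F. finite F \<and> real k \<le> (\<Sum>n\<in>F. f (x + lam n))"
  shows "x \<in> div_set f (range lam)"
proof -
  let ?S = "\<Sum>\<^sub>\<infinity>n. ennreal (f (x + lam n))"
  have ge: "of_nat k \<le> ?S" for k
  proof -
    obtain F where "finite F" and F: "real k \<le> (\<Sum>n\<in>F. f (x + lam n))"
      using unbounded by blast
    have "of_nat k \<le> ennreal (\<Sum>n\<in>F. f (x + lam n))"
      using F by (simp add: ennreal_of_nat_eq_real_of_nat ennreal_leI)
    also have "\<dots> = (\<Sum>n\<in>F. ennreal (f (x + lam n)))"
      using nonneg by (simp add: sum_ennreal)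
    also have "\<dots> \<le> ?S"
      unfolding nonneg_infsum_complete[OF zero_le] using \<open>finite F\<close> by (intro SUP_upper) auto
    finally show ?thesis .
  qed
  have "?S = \<infinity>"
  proof (rule ccontr)
    assume "?S \<noteq> \<infinity>"
    then obtain k where "?S < of_nat k"
      using ennreal_Ex_less_of_nat by (auto simp: less_top)
    with ge[of k] show False by simp
  qed
  then show ?thesis
    unfolding div_set_def shift_sum_range[OF assms(1)] by simp
qed

lemma dec_gap_asymp_denseI:
  fixes lam d :: "nat \<Rightarrow> real"
  assumes "0 \<le> lam 0" and gap: "\<And>n. lam (Suc n) - lam n = d n"
    and "\<And>n. 0 < d n" "decseq d" "d \<longlonglongrightarrow> 0" "\<not> bdd_above (range lam)"
  shows "dec_gap_asymp_dense (range lam)"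
proof -
  have mono: "strict_mono lam"
    unfolding strict_mono_Suc_iff using gap assms(3) by (metis diff_gt_0_iff_gt)
  have "0 \<le> lam n" for n
    using assms(1) strict_mono_less_eq[OF mono, of 0 n] by simp
  moreover have "lam (Suc (Suc n)) - lam (Suc n) \<le> lam (Suc n) - lam n" for n
    using decseq_SucD[OF assms(4)] by (simp add: gap)
  moreover have "(\<lambda>n. lam (Suc n) - lam n) \<longlonglongrightarrow> 0"
    using assms(5) by (simp add: gap)
  ultimately show ?thesis
    unfolding dec_gap_asymp_dense_def using mono assms(6) by (intro conjI exI[of _ lam]) auto
qed

fun block_start :: "nat \<Rightarrow> nat" where
  "block_start 0 = 0"
| "block_start (Suc k) = block_start k + 4 * ((k + 1) * 2 ^ block_start k)"

definition block_density :: "nat \<Rightarrow> nat" where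
  "block_density k = (k + 1) * 2 ^ block_start k"

lemma block_start_Suc: "block_start (Suc k) = block_start k + 4 * block_density k"
  by (simp add: block_density_def)

declare block_start.simps(2) [simp del]

lemma block_density_ge: "k + 1 \<le> block_density k"
  unfolding block_density_def using mult_le_mono2[of 1 "2 ^ block_start k" "k + 1"] by simp

lemma strict_mono_block_start: "strict_mono block_start"
proof (unfold strict_mono_Suc_iff, intro allI)
  fix k
  show "block_start k < block_start (Suc k)"
    using block_density_ge[of k] by (simp add: block_start_Suc)
qed

lemma mono_block_density: "mono block_density"
proof (rule monoI)
  fix k k' :: nat assume "k \<le> k'"
  then have "(2::nat) ^ block_start k \<le> 2 ^ block_start k'"
    using strict_mono_less_eq[OF strict_mono_block_start] by simp
  with \<open>k \<le> k'\<close> show "block_density k \<le> block_density k'"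
    unfolding block_density_def by (intro mult_mono) auto
qed

abbreviation block_of :: "nat \<Rightarrow> nat" where
  "block_of \<equiv> segment_index block_start"

lemmas block_of_bounds = segment_index_bounds[OF strict_mono_block_start block_start.simps(1)]
lemmas block_of_ge = segment_index_ge[OF strict_mono_block_start block_start.simps(1)]
lemmas block_of_eqI = segment_index_eqI[OF strict_mono_block_start block_start.simps(1)]
lemmas mono_block_of = mono_segment_index[OF strict_mono_block_start block_start.simps(1)]

definition grid :: "nat \<Rightarrow> real" where
  "grid n = 4 * real (block_of n)
     + real (n - block_start (block_of n)) / real (block_density (block_of n))"

lemma grid_block_start_add:
  assumes "t < 4 * block_density k"
  shows "grid (block_start k + t) = 4 * real k + real t / real (block_density k)"
proof -
  have "block_of (block_start k + t) = k"
    using assms by (intro block_of_eqI) (auto simp: block_start_Suc)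
  then show ?thesis unfolding grid_def by simp
qed

lemma grid_bounds: "4 * real (block_of n) \<le> grid n" "grid n < 4 * real (block_of n) + 4"
proof -
  let ?k = "block_of n"
  have "n - block_start ?k < 4 * block_density ?k"
    using block_of_bounds[of n] by (simp add: block_start_Suc)
  then have "real (n - block_start ?k) / real (block_density ?k) < 4"
    using block_density_ge[of ?k] by (simp add: divide_less_eq)
  then show "4 * real ?k \<le> grid n" "grid n < 4 * real ?k + 4"
    unfolding grid_def by simp_all
qed

lemma grid_Suc_diff: "grid (Suc n) - grid n = 1 / real (block_density (block_of n))"
proof -
  define k where "k = block_of n"
  let ?m = "real (block_density k)"
  obtain t where n: "n = block_start k + t" and t: "t < 4 * block_density k"
    using block_of_bounds[of n] unfolding k_def
    by (metis block_start_Suc add_less_cancel_left le_Suc_ex)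
  have m: "0 < ?m" using block_density_ge[of k] by simp
  have grid_n: "grid n = 4 * real k + real t / ?m"
    using grid_block_start_add[OF t] n by simp
  show ?thesis
  proof (cases "Suc t < 4 * block_density k")
    case True
    then have "grid (Suc n) = 4 * real k + real (Suc t) / ?m"
      using grid_block_start_add[OF True] n by simp
    with grid_n m show ?thesis by (simp add: field_simps k_def)
  next
    case False
    then have "Suc t = 4 * block_density k" using t by simp
    then have "Suc n = block_start (Suc k) + 0" using n by (simp add: block_start_Suc)
    then have "grid (Suc n) = 4 * real k + 4"
      using grid_block_start_add[of 0 "Suc k"] block_density_ge[of "Suc k"] by simp
    moreover have "real t = 4 * ?m - 1" using \<open>Suc t = _\<close> by linarith
    ultimately show ?thesis using grid_n m by (simp add: field_simps k_def)
  qed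
qed

lemma strict_mono_grid: "strict_mono grid"
proof (unfold strict_mono_Suc_iff, intro allI)
  fix n
  have "0 < 1 / real (block_density (block_of n))" using block_density_ge[of "block_of n"] by simp
  then show "grid n < grid (Suc n)" using grid_Suc_diff[of n] by linarith
qed

lemma dec_gap_asymp_dense_grid: "dec_gap_asymp_dense (range grid)"
proof (rule dec_gap_asymp_denseI[where d = "\<lambda>n. 1 / real (block_density (block_of n))"])
  show "grid (Suc n) - grid n = 1 / real (block_density (block_of n))" for n
    by (rule grid_Suc_diff)
  show "0 \<le> grid 0" using grid_bounds(1)[of 0] by simp
  show "0 < 1 / real (block_density (block_of n))" for n
    using block_density_ge[of "block_of n"] by simp
  show "decseq (\<lambda>n. 1 / real (block_density (block_of n)))"
  proof (rule decseq_SucI)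
    fix n
    have "block_density (block_of n) \<le> block_density (block_of (Suc n))"
      using mono_block_of mono_block_density by (simp add: monoD)
    then show "1 / real (block_density (block_of (Suc n)))
        \<le> 1 / real (block_density (block_of n))"
      using block_density_ge[of "block_of n"] by (intro divide_left_mono) auto
  qed
  have "filterlim block_of at_top sequentially"
    unfolding filterlim_at_top eventually_sequentially using block_of_ge by blast
  then have "filterlim (\<lambda>n. real (block_density (block_of n))) at_top sequentially"
    by (rule filterlim_at_top_mono[OF filterlim_compose[OF filterlim_real_sequentially]])
       (intro always_eventually allI, use block_density_ge in \<open>simp add: Suc_le_eq less_imp_le\<close>)
  then show "(\<lambda>n. 1 / real (block_density (block_of n))) \<longlonglongrightarrow> 0"
    by (intro tendsto_divide_0[OF tendsto_const] filterlim_at_top_imp_at_infinity)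
  show "\<not> bdd_above (range grid)"
  proof
    assume "bdd_above (range grid)"
    then obtain B where B: "\<And>n. grid n \<le> B" by (auto simp: bdd_above_def)
    obtain k :: nat where "B < 4 * real k"
      using reals_Archimedean2[of "B / 4"] by (auto simp: mult.commute)
    moreover have "grid (block_start k + 0) = 4 * real k"
      using grid_block_start_add[of 0 k] block_density_ge[of k] by simp
    ultimately show False using B[of "block_start k"] by simp
  qed
qed

definition block_weight :: "nat \<Rightarrow> real" where
  "block_weight k = (1 / 2) ^ block_start k"

lemma block_density_mult_weight: "real (block_density k) * block_weight k = real k + 1"
proof -
  have "real (block_density k) * block_weight k = (real k + 1) * (2 * (1 / 2)) ^ block_start k"
    unfolding block_density_def block_weight_def power_mult_distrib by (simp add: algebra_simps)
  then show ?thesis by simp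
qed

lemma block_weight_antimono: "k \<le> k' \<Longrightarrow> block_weight k' \<le> block_weight k"
  unfolding block_weight_def using strict_mono_less_eq[OF strict_mono_block_start]
  by (intro power_decreasing) auto

lemma block_weight_bounds: "0 \<le> block_weight k" "block_weight k \<le> 1"
  unfolding block_weight_def by (simp_all add: power_le_one)

lemma block_weight_Suc_le: "n < block_start (Suc k) \<Longrightarrow> block_weight (Suc k) \<le> (1 / 2) ^ n"
  unfolding block_weight_def by (intro power_decreasing) auto

lemma block_weight_tendsto_zero: "block_weight \<longlonglongrightarrow> 0"
  using LIMSEQ_subseq_LIMSEQ[OF LIMSEQ_realpow_zero strict_mono_block_start, of "1 / 2"]
  unfolding block_weight_def[abs_def] by (simp add: o_def)

definition bump :: "real \<Rightarrow> real" where
  "bump y = block_weight (nat \<lfloor>y / 4\<rfloor>) * (1 - cos (pi * y / 2))"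

lemma bump_nonneg: "0 \<le> bump y"
  unfolding bump_def using block_weight_bounds(1) by simp

lemma bump_le: "bump y \<le> 2 * block_weight (nat \<lfloor>y / 4\<rfloor>)"
proof -
  have "1 - cos (pi * y / 2) \<le> 2" using cos_ge_minus_one[of "pi * y / 2"] by simp
  then have "block_weight (nat \<lfloor>y / 4\<rfloor>) * (1 - cos (pi * y / 2))
      \<le> block_weight (nat \<lfloor>y / 4\<rfloor>) * 2"
    by (rule mult_left_mono[OF _ block_weight_bounds(1)])
  then show ?thesis unfolding bump_def by (simp add: mult.commute)
qed

lemma bump_ge_block_weight:
  assumes "4 * real k + 1 \<le> y" "y \<le> 4 * real k + 3"
  shows "block_weight k \<le> bump y"
proof -
  have "\<lfloor>y / 4\<rfloor> = int k" using assms by (simp add: floor_eq_iff)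
  define \<phi> where "\<phi> = pi * (y - 4 * real k - 1) / 2"
  have "0 \<le> y - 4 * real k - 1" "y - 4 * real k - 1 \<le> 2" using assms by simp_all
  then have "0 \<le> \<phi>" "\<phi> \<le> pi"
    unfolding \<phi>_def using mult_left_mono[of _ 2 pi] by simp_all
  have "pi * y / 2 = (\<phi> + pi / 2) + 2 * real k * pi"
    unfolding \<phi>_def by (simp add: field_simps)
  then have "cos (pi * y / 2) = cos (\<phi> + pi / 2)"
    by (simp only: cos_add[of "\<phi> + pi / 2"]) simp
  also have "\<dots> = - sin \<phi>"
    by (simp add: cos_add)
  finally have "cos (pi * y / 2) \<le> 0" using sin_ge_zero[OF \<open>0 \<le> \<phi>\<close> \<open>\<phi> \<le> pi\<close>] by simp
  then show ?thesis
    unfolding bump_def \<open>\<lfloor>y / 4\<rfloor> = int k\<close> using block_weight_bounds(1)[of k]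
    by (simp add: mult_le_cancel_left1)
qed

lemma bump_C0_plus: "bump \<in> C0_plus"
proof -
  have "continuous_on UNIV bump"
    unfolding bump_def[abs_def]
  proof (rule continuous_on_floor_step_mult)
    show "1 - cos (pi * (4 * of_int j) / 2) = 0" for j :: int
      using cos_int_2pin[of j] by (simp add: mult.commute mult.left_commute)
    show "\<bar>block_weight k\<bar> \<le> 1" for k using block_weight_bounds[of k] by simp
  qed (auto intro!: continuous_intros)
  moreover have "(bump \<longlongrightarrow> 0) at_top"
  proof (rule tendsto_sandwich[OF _ _ tendsto_const])
    have "filterlim (\<lambda>y::real. y * (1 / 4)) at_top at_top"
      by (rule filterlim_at_top_mult_tendsto_pos[OF tendsto_const _ filterlim_ident]) simp
    then have "filterlim (\<lambda>y::real. nat \<lfloor>y / 4\<rfloor>) sequentially at_top"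
      unfolding times_divide_eq_right mult_1_right
      by (intro filterlim_compose[OF filterlim_nat_sequentially]
                filterlim_compose[OF filterlim_floor_sequentially])
    then have "((\<lambda>y::real. block_weight (nat \<lfloor>y / 4\<rfloor>)) \<longlongrightarrow> 0) at_top"
      by (rule filterlim_compose[OF block_weight_tendsto_zero])
    then show "((\<lambda>y::real. 2 * block_weight (nat \<lfloor>y / 4\<rfloor>)) \<longlongrightarrow> 0) at_top"
      using tendsto_mult_right_zero by blast
  qed (simp_all add: bump_nonneg bump_le)
  ultimately show ?thesis
    unfolding C0_plus_def using bump_nonneg by blast
qed

lemma grid_second_quarter:
  assumes "t < block_density k"
  shows "4 * real k + 1 \<le> grid (block_start k + (block_density k + t))"
    "grid (block_start k + (block_density k + t)) < 4 * real k + 2"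
proof -
  have m: "0 < real (block_density k)" using block_density_ge[of k] by simp
  have "grid (block_start k + (block_density k + t))
          = 4 * real k + 1 + real t / real (block_density k)"
    using grid_block_start_add[of "block_density k + t" k] assms m by (simp add: add_divide_distrib)
  moreover have "real t / real (block_density k) < 1" using assms m by simp
  ultimately show "4 * real k + 1 \<le> grid (block_start k + (block_density k + t))"
    "grid (block_start k + (block_density k + t)) < 4 * real k + 2" by simp_all
qed

lemma conv_set_bump_grid:
  assumes "4 \<le> x"
  shows "x \<in> conv_set bump (range grid)"
proof (rule conv_set_range_if_summable_majorant[OF strict_mono_imp_inj_on[OF strict_mono_grid]])
  show "summable (\<lambda>n. 2 * (1 / 2 :: real) ^ n)"
    by (intro summable_mult summable_geometric) simp
  show "0 \<le> 2 * (1 / 2 :: real) ^ n" for n by simp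
  show "bump (x + grid n) \<le> 2 * (1 / 2) ^ n" for n
  proof -
    let ?k = "block_of n"
    have "real (Suc ?k) \<le> (x + grid n) / 4" using grid_bounds(1)[of n] assms by simp
    then have "Suc ?k \<le> nat \<lfloor>(x + grid n) / 4\<rfloor>" by (simp add: le_nat_floor)
    then have "block_weight (nat \<lfloor>(x + grid n) / 4\<rfloor>) \<le> block_weight (Suc ?k)"
      by (rule block_weight_antimono)
    also have "\<dots> \<le> (1 / 2) ^ n"
      using block_of_bounds(2) by (rule block_weight_Suc_le)
    finally show ?thesis using bump_le[of "x + grid n"] by linarith
  qed
qed

lemma div_set_bump_grid:
  assumes "0 \<le> x" "x \<le> 1"
  shows "x \<in> div_set bump (range grid)"
proof (rule div_set_range_if_unbounded_sums[OF strict_mono_imp_inj_on[OF strict_mono_grid]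
                                                bump_nonneg])
  fix k
  let ?n = "\<lambda>t. block_start k + (block_density k + t)"
  have "real k \<le> real (block_density k) * block_weight k"
    using block_density_mult_weight[of k] by simp
  also have "\<dots> = (\<Sum>t<block_density k. block_weight k)" by simp
  also have "\<dots> \<le> (\<Sum>t<block_density k. bump (x + grid (?n t)))"
    using grid_second_quarter assms by (intro sum_mono bump_ge_block_weight) fastforce+
  also have "\<dots> = (\<Sum>n\<in>?n ` {..<block_density k}. bump (x + grid n))"
    by (subst sum.reindex) (auto simp: inj_on_def)
  finally show "\<exists>F. finite F \<and> real k \<le> (\<Sum>n\<in>F. bump (x + grid n))" by blast
qed

theorem theorem3p3:
  shows "\<exists>\<Lambda> f. dec_gap_asymp_dense \<Lambda> \<and> f \<in> C0_plus \<and>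
           {0..1} \<subseteq> div_set f \<Lambda> \<and> {4..5} \<subseteq> conv_set f \<Lambda>"
  using dec_gap_asymp_dense_grid bump_C0_plus div_set_bump_grid conv_set_bump_grid
  by (intro exI[of _ "range grid"] exI[of _ bump]) auto

end
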